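(* For a positive integer $n$, let $m(n)$ denote the minimal integer $m$ such that there exist subsets $A_1,\ldots,A_m$ of $\{1,\ldots,4n\}$ with $|A_i|=2n$ for each $i$, such that for every subset $B\subseteq\{1,\ldots,4n\}$ with $|B|=2n$ there is at least one $i$, $1\le i\le m$, with $|A_i\cap B|=n$. Then for every prime $p>3$ we have $m(p)\ge p$. *)

theory Defs
  imports "HOL-Computational_Algebra.Primes"
begin

definition good_family :: "nat \<Rightarrow> nat \<Rightarrow> (nat \<Rightarrow> nat set) \<Rightarrow> bool" where
  "good_family n m A \<longleftrightarrow>
     (\<forall>i\<in>{1..m}. A i \<subseteq> {1..4*n} \<and> card (A i) = 2*n) \<and>
     (\<forall>B. B \<subseteq> {1..4*n} \<and> card B = 2*n \<longrightarrow> (\<exists>i\<in>{1..m}. card (A i \<inter> B) = n))"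

definition m_min :: "nat \<Rightarrow> nat" where
  "m_min n = (LEAST m. \<exists>A. good_family n m A)"

end

(*
  Suppose m < p and A_1, ..., A_m is a good family for n = p. The 2m sets A_i and their
  complements each contain half of {1..4p}, and 2m < 2^p, so choosing greedily a point that
  lies in at least half of the remaining sets yields a p-set T meeting every A_i and every
  complement; hence 0 < |A_i \<inter> T| < p. Fix 2p - 1 further points R. For every p-subset B of R
  the 2p-set B \<union> T meets some A_i in exactly p points, so the integer polynomial
  \<Prod>_i (|A_i \<inter> T| - p + \<Sum>_{j \<in> A_i} x_j) vanishes at the indicator vector of every such B,
  and so does its sum over all these B. Expanding, a monomial supported on a nonempty set S of
  fewer than p variables is counted binomial(2p-1-|S|, p-|S|) times, a multiple of p; modulo p
  the sum is therefore binomial(2p-1, p) \<Prod>_i (|A_i \<inter> T| - p), a product of non-multiples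
  of p, and cannot vanish.
*)

theory Submission
  imports Defs
begin

lemma prime_dvd_choose:
  fixes p n k :: nat
  assumes "prime p" "p \<le> n" "k < p" "n - k < p"
  shows "p dvd n choose k"
proof -
  have "fact k * fact (n - k) * (n choose k) = (fact n :: nat)"
    using assms by (intro binomial_fact_lemma) simp
  moreover have "p dvd (fact n :: nat)" "\<not> p dvd (fact k :: nat)" "\<not> p dvd (fact (n - k) :: nat)"
    using assms by (simp_all add: prime_dvd_fact_iff)
  ultimately show ?thesis
    using \<open>prime p\<close> by (metis prime_dvd_mult_iff)
qed

lemma prime_not_dvd_choose:
  fixes p n :: nat
  assumes p: "prime p" and "p \<le> n" "n < 2 * p"
  shows "\<not> p dvd n choose p"
proof
  assume "p dvd n choose p"
  have "fact p * (fact (n - p) * (n choose p)) = fact p * \<Prod>{Suc p..n}"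
    using binomial_fact_lemma[of p n] fact_eq_fact_times[of p n] assms by (simp add: mult_ac)
  then have "fact (n - p) * (n choose p) = \<Prod>{Suc p..n}"
    by simp
  with \<open>p dvd n choose p\<close> have "p dvd \<Prod>{Suc p..n}"
    by (metis dvd_mult)
  then obtain i where i: "i \<in> {Suc p..n}" "p dvd i"
    using p by (auto simp: prime_dvd_prod_iff)
  then have "p dvd i - p"
    by (simp add: dvd_diff_nat)
  moreover have "0 < i - p" "i - p < p"
    using i \<open>n < 2 * p\<close> by auto
  ultimately show False
    using nat_dvd_not_less by blast
qed

lemma card_supersets:
  assumes "finite R" "S \<subseteq> R" "card S \<le> k"
  shows "card {B. B \<subseteq> R \<and> card B = k \<and> S \<subseteq> B} = (card R - card S) choose (k - card S)"
proof -
  have "finite S"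
    using assms(2) by (rule rev_finite_subset[OF assms(1)])
  let ?C = "{C. C \<subseteq> R - S \<and> card C = k - card S}"
  have "{B. B \<subseteq> R \<and> card B = k \<and> S \<subseteq> B} = (\<lambda>C. C \<union> S) ` ?C"
  proof (intro equalityI subsetI)
    fix B assume B: "B \<in> {B. B \<subseteq> R \<and> card B = k \<and> S \<subseteq> B}"
    then have "card (B - S) = k - card S"
      using \<open>finite S\<close> by (simp add: card_Diff_subset)
    with B show "B \<in> (\<lambda>C. C \<union> S) ` ?C"
      by (intro image_eqI[of _ _ "B - S"]) auto
  next
    fix B assume "B \<in> (\<lambda>C. C \<union> S) ` ?C"
    then obtain C where C: "C \<subseteq> R - S" "card C = k - card S" "B = C \<union> S"
      by auto
    moreover have "finite C" "C \<inter> S = {}"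
      using C rev_finite_subset[OF assms(1)] by auto
    ultimately have "card B = card C + card S"
      using \<open>finite S\<close> by (simp add: card_Un_disjoint)
    with C assms show "B \<in> {B. B \<subseteq> R \<and> card B = k \<and> S \<subseteq> B}"
      by auto
  qed
  moreover have "inj_on (\<lambda>C. C \<union> S) ?C"
    by (rule inj_onI) blast
  ultimately have "card {B. B \<subseteq> R \<and> card B = k \<and> S \<subseteq> B} = card ?C"
    by (simp add: card_image)
  also have "\<dots> = card (R - S) choose (k - card S)"
    using assms by (simp add: n_subsets)
  finally show ?thesis
    using assms \<open>finite S\<close> by (simp add: card_Diff_subset)
qed

lemma sum_card_members:
  assumes "finite X" "finite F" "\<And>S. S \<in> F \<Longrightarrow> S \<subseteq> X"
  shows "(\<Sum>x\<in>X. card {S\<in>F. x \<in> S}) = (\<Sum>S\<in>F. card S)"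
proof -
  have "(\<Sum>x\<in>X. card {S\<in>F. x \<in> S}) = (\<Sum>x\<in>X. \<Sum>S\<in>F. if x \<in> S then 1 else 0)"
    using assms by (simp add: sum.If_cases Int_def)
  also have "\<dots> = (\<Sum>S\<in>F. \<Sum>x\<in>X. if x \<in> S then 1 else 0)"
    by (rule sum.swap)
  also have "\<dots> = (\<Sum>S\<in>F. card S)"
  proof (rule sum.cong[OF refl])
    fix S assume "S \<in> F"
    then have "{x\<in>X. x \<in> S} = S"
      using assms by auto
    then show "(\<Sum>x\<in>X. if x \<in> S then 1 else 0) = card S"
      using assms by (simp add: sum.If_cases Int_def)
  qed
  finally show ?thesis .
qed

lemma popular_point_exists:
  assumes "finite X" "X \<noteq> {}" "finite F"
    and "\<And>S. S \<in> F \<Longrightarrow> S \<subseteq> X \<and> card X \<le> 2 * card S"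
  shows "\<exists>x\<in>X. card F \<le> 2 * card {S\<in>F. x \<in> S}"
proof (rule ccontr)
  assume "\<not> ?thesis"
  then have "(\<Sum>x\<in>X. 2 * card {S\<in>F. x \<in> S}) < (\<Sum>x\<in>X. card F)"
    using assms by (intro sum_strict_mono) auto
  also have "\<dots> = (\<Sum>S\<in>F. card X)"
    by simp
  also have "\<dots> \<le> (\<Sum>S\<in>F. 2 * card S)"
    using assms by (intro sum_mono) auto
  also have "\<dots> = (\<Sum>x\<in>X. 2 * card {S\<in>F. x \<in> S})"
    using assms sum_card_members[of X F] by (simp add: sum_distrib_left[symmetric])
  finally show False
    by simp
qed

lemma small_transversal_exists:
  assumes "finite X" "finite F" "card F < 2 ^ c"
    and "\<And>S. S \<in> F \<Longrightarrow> S \<subseteq> X \<and> S \<noteq> {} \<and> card X \<le> 2 * card S"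
  shows "\<exists>H\<subseteq>X. card H \<le> c \<and> (\<forall>S\<in>F. H \<inter> S \<noteq> {})"
  using assms(2-)
proof (induction c arbitrary: F)
  case 0
  then have "F = {}"
    by simp
  then show ?case
    by (intro exI[of _ "{}"]) simp
next
  case (Suc c)
  show ?case
  proof (cases "F = {}")
    case True
    then show ?thesis
      by (intro exI[of _ "{}"]) simp
  next
    case False
    then obtain S where "S \<in> F"
      by blast
    with Suc.prems(3) have "X \<noteq> {}"
      by blast
    then obtain x where x: "x \<in> X" "card F \<le> 2 * card {S\<in>F. x \<in> S}"
      using popular_point_exists[OF assms(1) _ Suc.prems(1)] Suc.prems(3) by blast
    let ?F' = "{S\<in>F. x \<notin> S}"
    have "card F = card {S\<in>F. x \<in> S} + card ?F'"
      using card_Int_Diff[OF Suc.prems(1), of "{S. x \<in> S}"] by (simp add: Int_def set_diff_eq)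
    with x Suc.prems(2) have "card ?F' < 2 ^ c"
      by simp
    then obtain H where H: "H \<subseteq> X" "card H \<le> c" "\<forall>S\<in>?F'. H \<inter> S \<noteq> {}"
      using Suc.IH[of ?F'] Suc.prems(1,3) by auto
    have "finite H"
      using H(1) by (rule rev_finite_subset[OF assms(1)])
    with H(2) have "card (insert x H) \<le> Suc c"
      by (simp add: card_insert_if)
    with H x show ?thesis
      by (intro exI[of _ "insert x H"]) auto
  qed
qed

lemma splitting_set_exists:
  assumes X: "finite X" "card X = 2 * n" and "0 < n"
    and I: "finite I" "2 * card I < 2 ^ k" and "k \<le> card X"
    and A: "\<And>i. i \<in> I \<Longrightarrow> A i \<subseteq> X \<and> card (A i) = n"
  shows "\<exists>T\<subseteq>X. card T = k \<and> (\<forall>i\<in>I. A i \<inter> T \<noteq> {} \<and> \<not> T \<subseteq> A i)"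
proof -
  let ?F = "A ` I \<union> (\<lambda>i. X - A i) ` I"
  have "finite ?F"
    using I(1) by simp
  have "card ?F \<le> card (A ` I) + card ((\<lambda>i. X - A i) ` I)"
    by (rule card_Un_le)
  also have "\<dots> \<le> card I + card I"
    by (intro add_mono card_image_le I(1))
  also have "\<dots> < 2 ^ k"
    using I(2) by simp
  finally have F_card: "card ?F < 2 ^ k" .
  have F_sets: "S \<subseteq> X \<and> S \<noteq> {} \<and> card X \<le> 2 * card S" if "S \<in> ?F" for S
  proof -
    from that obtain i where i: "i \<in> I" "S = A i \<or> S = X - A i"
      by blast
    have Ai: "A i \<subseteq> X" "card (A i) = n"
      using A[OF i(1)] by simp_all
    have "finite (A i)"
      using rev_finite_subset[OF X(1) Ai(1)] .
    then have "card (X - A i) = n"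
      using Ai X by (simp add: card_Diff_subset)
    with i(2) Ai have "S \<subseteq> X" "card S = n"
      by auto
    with \<open>0 < n\<close> X(2) show ?thesis
      by auto
  qed
  obtain H where H: "H \<subseteq> X" "card H \<le> k" "\<forall>S\<in>?F. H \<inter> S \<noteq> {}"
    using small_transversal_exists[OF X(1) \<open>finite ?F\<close> F_card F_sets] by blast
  have "finite H"
    using H(1) by (rule rev_finite_subset[OF X(1)])
  have "k - card H \<le> card (X - H)"
    using H(1) \<open>k \<le> card X\<close> \<open>finite H\<close> by (simp add: card_Diff_subset)
  then obtain E where E: "E \<subseteq> X - H" "card E = k - card H" "finite E"
    by (rule obtain_subset_with_card_n)
  have "H \<inter> E = {}"
    using E(1) by blast
  then have "card (H \<union> E) = k"
    using card_Un_disjoint[OF \<open>finite H\<close> \<open>finite E\<close>] E(2) H(2) by simp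
  moreover have "H \<union> E \<subseteq> X"
    using H(1) E(1) by blast
  moreover have "A i \<inter> (H \<union> E) \<noteq> {} \<and> \<not> H \<union> E \<subseteq> A i" if "i \<in> I" for i
  proof -
    from H(3) that have "H \<inter> A i \<noteq> {}" "H \<inter> (X - A i) \<noteq> {}"
      by auto
    then show ?thesis
      by blast
  qed
  ultimately show ?thesis
    by blast
qed

text \<open>The sum of the polynomial \<Prod>i\<in>I. c i + \<Sum>j\<in>L i. x j over the indicator vectors of the
  q-subsets B of R containing S; the parameter S records the monomial being expanded.\<close>

definition subset_poly_sum :: "'a set \<Rightarrow> nat \<Rightarrow> ('i \<Rightarrow> 'a set) \<Rightarrow> ('i \<Rightarrow> int) \<Rightarrow> 'a set \<Rightarrow> 'i set \<Rightarrow> int"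
  where "subset_poly_sum R q L c S I =
    (\<Sum>B | B \<subseteq> R \<and> card B = q \<and> S \<subseteq> B. \<Prod>i\<in>I. c i + int (card (L i \<inter> B)))"

lemma subset_poly_sum_empty_index:
  assumes "finite R" "S \<subseteq> R" "card S \<le> q"
  shows "subset_poly_sum R q L c S {} = int ((card R - card S) choose (q - card S))"
  using card_supersets[OF assms] by (simp add: subset_poly_sum_def)

lemma subset_poly_sum_insert:
  assumes "finite R" "finite I" "i \<notin> I"
  shows "subset_poly_sum R q L c S (insert i I) =
    c i * subset_poly_sum R q L c S I + (\<Sum>j\<in>L i \<inter> R. subset_poly_sum R q L c (insert j S) I)"
proof -
  let ?F = "{B. B \<subseteq> R \<and> card B = q \<and> S \<subseteq> B}"
  let ?P = "\<lambda>B. \<Prod>i\<in>I. c i + int (card (L i \<inter> B))"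
  have "finite ?F"
    using assms by (auto intro: finite_subset[of _ "Pow R"])
  have card_times: "int (card (L i \<inter> B)) * ?P B = (\<Sum>j\<in>L i \<inter> R. if j \<in> B then ?P B else 0)"
    if "B \<subseteq> R" for B
  proof -
    have "L i \<inter> R \<inter> {j. j \<in> B} = L i \<inter> B"
      using that by auto
    then show ?thesis
      using assms by (simp add: sum.If_cases)
  qed
  have "subset_poly_sum R q L c S (insert i I) = (\<Sum>B\<in>?F. c i * ?P B + int (card (L i \<inter> B)) * ?P B)"
    using assms by (simp add: subset_poly_sum_def algebra_simps)
  also have "\<dots> = c i * subset_poly_sum R q L c S I + (\<Sum>B\<in>?F. \<Sum>j\<in>L i \<inter> R. if j \<in> B then ?P B else 0)"
    by (simp add: subset_poly_sum_def sum.distrib sum_distrib_left card_times)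
  also have "(\<Sum>B\<in>?F. \<Sum>j\<in>L i \<inter> R. if j \<in> B then ?P B else 0)
      = (\<Sum>j\<in>L i \<inter> R. \<Sum>B\<in>?F. if j \<in> B then ?P B else 0)"
    by (rule sum.swap)
  also have "\<dots> = (\<Sum>j\<in>L i \<inter> R. subset_poly_sum R q L c (insert j S) I)"
  proof (rule sum.cong[OF refl])
    fix j
    have "{B\<in>?F. j \<in> B} = {B. B \<subseteq> R \<and> card B = q \<and> insert j S \<subseteq> B}"
      by auto
    then show "(\<Sum>B\<in>?F. if j \<in> B then ?P B else 0) = subset_poly_sum R q L c (insert j S) I"
      using sum.inter_filter[OF \<open>finite ?F\<close>, of ?P "\<lambda>B. j \<in> B"] by (simp add: subset_poly_sum_def)
  qed
  finally show ?thesis .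
qed

lemma prime_dvd_subset_poly_sum:
  assumes p: "prime p" and R: "finite R" "card R = 2 * p - 1"
    and "finite I" "S \<subseteq> R" "S \<noteq> {}" "card S + card I < p"
  shows "int p dvd subset_poly_sum R p L c S I"
  using assms(4-)
proof (induction I arbitrary: S rule: finite_induct)
  case empty
  have "0 < card S"
    using empty.prems rev_finite_subset[OF R(1)] by (simp add: card_gt_0_iff)
  then have "p dvd (2 * p - 1 - card S) choose (p - card S)"
    using empty.prems by (intro prime_dvd_choose p) auto
  then show ?case
    using empty.prems R subset_poly_sum_empty_index[of R S p L c] by simp
next
  case (insert i I)
  have "finite S"
    using insert.prems(1) by (rule rev_finite_subset[OF R(1)])
  have "int p dvd subset_poly_sum R p L c (insert j S) I" if "j \<in> L i \<inter> R" for j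
  proof (rule insert.IH)
    show "card (insert j S) + card I < p"
      using insert.prems insert.hyps \<open>finite S\<close> by (simp add: card_insert_if)
  qed (use that insert.prems in auto)
  moreover have "int p dvd subset_poly_sum R p L c S I"
    using insert by simp
  ultimately show ?case
    unfolding subset_poly_sum_insert[OF R(1) insert.hyps] by (intro dvd_add dvd_mult dvd_sum) auto
qed

lemma subset_poly_sum_mod_prime:
  assumes p: "prime p" and R: "finite R" "card R = 2 * p - 1"
    and "finite I" "card I < p"
  shows "int p dvd subset_poly_sum R p L c {} I - int ((2 * p - 1) choose p) * (\<Prod>i\<in>I. c i)"
  using assms(4-)
proof (induction I rule: finite_induct)
  case empty
  then show ?case
    using R subset_poly_sum_empty_index[of R "{}" p L c] by simp
next
  case (insert i I)
  have "int p dvd subset_poly_sum R p L c {j} I" if "j \<in> L i \<inter> R" for j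
    using insert that by (intro prime_dvd_subset_poly_sum p R) auto
  moreover have "int p dvd subset_poly_sum R p L c {} I - int ((2 * p - 1) choose p) * (\<Prod>i\<in>I. c i)"
    using insert by simp
  ultimately have "int p dvd c i * (subset_poly_sum R p L c {} I - int ((2 * p - 1) choose p) * (\<Prod>i\<in>I. c i))
      + (\<Sum>j\<in>L i \<inter> R. subset_poly_sum R p L c {j} I)"
    by (intro dvd_add dvd_mult dvd_sum) auto
  then show ?case
    using insert.hyps by (simp add: subset_poly_sum_insert[OF R(1)] algebra_simps)
qed

lemma subset_avoiding_shifts_exists:
  assumes p: "prime p" and R: "finite R" "card R = 2 * p - 1"
    and "finite I" "card I < p" "\<And>i. i \<in> I \<Longrightarrow> \<not> int p dvd c i"
  shows "\<exists>B\<subseteq>R. card B = p \<and> (\<forall>i\<in>I. c i + int (card (L i \<inter> B)) \<noteq> 0)"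
proof (rule ccontr)
  assume "\<not> ?thesis"
  then have "subset_poly_sum R p L c {} I = 0"
    unfolding subset_poly_sum_def using \<open>finite I\<close> by (intro sum.neutral) auto
  then have "int p dvd int ((2 * p - 1) choose p) * (\<Prod>i\<in>I. c i)"
    using subset_poly_sum_mod_prime[OF assms(1-5), of L c] by simp
  moreover have "\<not> int p dvd int ((2 * p - 1) choose p)"
    using prime_not_dvd_choose[OF p] prime_gt_1_nat[OF p] by simp
  moreover have "\<not> int p dvd (\<Prod>i\<in>I. c i)"
    using assms p by (auto simp: prime_dvd_prod_iff)
  ultimately show False
    using p by (simp add: prime_dvd_mult_iff)
qed

lemma good_family_exists: "\<exists>m A. good_family n m A"
proof -
  let ?X = "{S. S \<subseteq> {1..4*n} \<and> card S = 2*n}"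
  have "finite ?X"
    by (rule finite_subset[of _ "Pow {1..4*n}"]) auto
  then obtain h where h: "bij_betw h {1..card ?X} ?X"
    by (blast dest: ex_bij_betw_nat_finite_1)
  have meets_half: "\<exists>S\<in>?X. card (S \<inter> B) = n" if B: "B \<subseteq> {1..4*n}" "card B = 2*n" for B
  proof -
    obtain C where C: "C \<subseteq> B" "card C = n"
      using obtain_subset_with_card_n[of n B] B by auto
    have "finite B"
      using B(1) by (rule rev_finite_subset[OF finite_atLeastAtMost])
    then have "card ({1..4*n} - B) = 2*n"
      using B by (simp add: card_Diff_subset)
    then obtain D where D: "D \<subseteq> {1..4*n} - B" "card D = n"
      using obtain_subset_with_card_n[of n "{1..4*n} - B"] by auto
    have "card (C \<union> D) = 2*n"
      using B C D \<open>finite B\<close> by (subst card_Un_disjoint) (auto intro: rev_finite_subset[OF finite_atLeastAtMost])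
    moreover have "(C \<union> D) \<inter> B = C"
      using C D by auto
    ultimately show ?thesis
      using B C D by (intro bexI[of _ "C \<union> D"]) auto
  qed
  have "good_family n (card ?X) h"
    unfolding good_family_def
  proof (rule conjI; intro ballI allI impI)
    show "h i \<subseteq> {1..4*n} \<and> card (h i) = 2*n" if "i \<in> {1..card ?X}" for i
      using bij_betwE[OF h] that by blast
  next
    fix B assume "B \<subseteq> {1..4*n} \<and> card B = 2*n"
    then obtain S where "S \<in> ?X" "card (S \<inter> B) = n"
      using meets_half[of B] by blast
    moreover from \<open>S \<in> ?X\<close> have "S \<in> h ` {1..card ?X}"
      using bij_betw_imp_surj_on[OF h] by simp
    then obtain i where "i \<in> {1..card ?X}" "h i = S"
      by blast
    ultimately show "\<exists>i\<in>{1..card ?X}. card (h i \<inter> B) = n"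
      by blast
  qed
  then show ?thesis
    by blast
qed

lemma good_family_splitting_set:
  assumes good: "good_family n m A" and "0 < n" "2 * m < 2 ^ k" "k \<le> 4 * n"
  shows "\<exists>T\<subseteq>{1..4*n}. card T = k \<and> (\<forall>i\<in>{1..m}. 0 < card (A i \<inter> T) \<and> card (A i \<inter> T) < k)"
proof -
  have "A i \<subseteq> {1..4*n} \<and> card (A i) = 2*n" if "i \<in> {1..m}" for i
    using good that unfolding good_family_def by blast
  then obtain T where T: "T \<subseteq> {1..4*n}" "card T = k" "\<forall>i\<in>{1..m}. A i \<inter> T \<noteq> {} \<and> \<not> T \<subseteq> A i"
    using splitting_set_exists[of "{1..4*n}" "2*n" "{1..m}" k A] assms(2-) by auto
  have "finite T"
    using T(1) by (rule rev_finite_subset[OF finite_atLeastAtMost])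
  have "0 < card (A i \<inter> T) \<and> card (A i \<inter> T) < k" if "i \<in> {1..m}" for i
  proof -
    have "A i \<inter> T \<subset> T" "A i \<inter> T \<noteq> {}"
      using T(3) that by auto
    then show ?thesis
      using psubset_card_mono[OF \<open>finite T\<close>] \<open>finite T\<close> T(2) by (auto simp: card_gt_0_iff)
  qed
  with T(1,2) show ?thesis
    by blast
qed

lemma good_family_size_ge_prime:
  assumes p: "prime p" and good: "good_family p m A"
  shows "p \<le> m"
proof (rule ccontr)
  assume "\<not> p \<le> m"
  let ?X = "{1..4*p}"
  have "m < 2 ^ (p - 1)"
    using less_exp[of "p - 1"] \<open>\<not> p \<le> m\<close> by linarith
  then have "2 * m < 2 ^ p"
    using prime_gt_0_nat[OF p] by (cases p) auto
  then obtain T where T: "T \<subseteq> ?X" "card T = p" "\<forall>i\<in>{1..m}. 0 < card (A i \<inter> T) \<and> card (A i \<inter> T) < p"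
    using good_family_splitting_set[OF good prime_gt_0_nat[OF p], of p] by auto
  have "finite T"
    using T(1) by (rule rev_finite_subset[OF finite_atLeastAtMost])
  define c where "c i = int (card (A i \<inter> T)) - int p" for i
  have "\<not> int p dvd c i" if "i \<in> {1..m}" for i
  proof
    assume "int p dvd c i"
    then have "p dvd card (A i \<inter> T)"
      unfolding c_def by (metis diff_add_cancel dvd_add dvd_refl int_dvd_int_iff)
    with T(3) that show False
      using nat_dvd_not_less by blast
  qed
  moreover have "2 * p - 1 \<le> card (?X - T)"
    using T by (simp add: card_Diff_subset \<open>finite T\<close>)
  then obtain R where R: "R \<subseteq> ?X - T" "card R = 2 * p - 1"
    by (meson obtain_subset_with_card_n)
  ultimately obtain B where B: "B \<subseteq> R" "card B = p" "\<forall>i\<in>{1..m}. c i + int (card (A i \<inter> B)) \<noteq> 0"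
    using subset_avoiding_shifts_exists[OF p, of R "{1..m}" c A] R \<open>\<not> p \<le> m\<close>
    by (auto intro: rev_finite_subset[OF finite_atLeastAtMost])
  have "finite B" "B \<inter> T = {}"
    using B R by (auto intro: rev_finite_subset[OF finite_atLeastAtMost])
  then have "B \<union> T \<subseteq> ?X" "card (B \<union> T) = 2 * p"
    using B R T \<open>finite T\<close> by (auto simp: card_Un_disjoint)
  then obtain i where i: "i \<in> {1..m}" "card (A i \<inter> (B \<union> T)) = p"
    using good unfolding good_family_def by blast
  have "card (A i \<inter> (B \<union> T)) = card (A i \<inter> T) + card (A i \<inter> B)"
    unfolding Int_Un_distrib Un_commute[of "A i \<inter> B"]
    by (rule card_Un_disjoint) (use \<open>finite B\<close> \<open>finite T\<close> \<open>B \<inter> T = {}\<close> in auto)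
  with i(2) have "c i + int (card (A i \<inter> B)) = 0"
    unfolding c_def by linarith
  with B(3) i(1) show False
    by blast
qed

theorem theorem2:
  fixes p :: nat
  assumes "prime p" and "p > 3"
  shows "m_min p \<ge> p"
proof -
  obtain A where "good_family p (m_min p) A"
    unfolding m_min_def using LeastI_ex[OF good_family_exists] by blast
  \<comment> \<open>The bound holds for every prime.\<close>
  with \<open>prime p\<close> show ?thesis
    by (rule good_family_size_ge_prime)
qed

end
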